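(* For $n\in \mathbb N_{0}$, \begin{align*} H_{n+1}^{(2)}&=\sum_{j=0}^{n}\binom{n+1}{j+1}\frac{(-1)^{j}}{(j+1)^2} -\sum_{k=0}^{n-1}\frac{1}{k+2}\sum_{j=0}^{k}\binom{k+1}{j+1}\frac{(-1)^{j}}{j+1}\,,\\ H_{n+1}^{(3)}&=\sum_{j=0}^{n}\binom{n+1}{j+1}\frac{(-1)^{j}}{(j+1)^3} -\sum_{j=0}^{n-1}\frac{1}{(j+2)^2}\sum_{\ell=0}^{j}\binom{j+1}{\ell+1}\frac{(-1)^{\ell}}{\ell+1} -\sum_{j=0}^{n-1}\frac{1}{j+2}\sum_{\ell=0}^{j}\binom{j+1}{\ell+1}\frac{(-1)^{\ell}}{(\ell+1)^2}\,. \end{align*}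
   Context: $H_n^{(q)}=\sum_{j=1}^n j^{-q}$ for $q\in\mathbb N$; empty sums are $0$. *)

theory Defs
  imports Complex_Main
begin

definition gen_harm :: "nat \<Rightarrow> nat \<Rightarrow> real" where
  "gen_harm q n = (\<Sum>j=1..n. 1 / (real j) ^ q)"

end

theory Submission imports Defs begin

text \<open>Put \<open>S m q = (\<Sum>j<m. binom m (j+1) (-1)^j / (j+1)^q)\<close>. Pascal's rule and absorption give
  \<open>S (m+1) (q+1) = S m (q+1) + S (m+1) q / (m+1)\<close>, and the binomial theorem gives
  \<open>S (m+1) 0 = 1\<close>, so \<open>S m 1\<close> is the harmonic number \<open>H\<^sub>m\<close>. With these recurrences both
  identities follow by induction on \<open>n\<close>: the two sides grow by the same amount.\<close>

definition alt_binomial_sum :: "nat \<Rightarrow> nat \<Rightarrow> real" where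
  "alt_binomial_sum m q = (\<Sum>j<m. real (m choose (j+1)) * (-1)^j / (real j + 1)^q)"

lemma alt_binomial_sum_Suc_0: "alt_binomial_sum (Suc m) 0 = 1"
proof -
  have "0 = (\<Sum>i\<le>Suc m. (-1)^i * real (Suc m choose i))"
    by (rule choose_alternating_sum [symmetric]) simp
  also have "\<dots> = 1 - (\<Sum>i\<le>m. (-1)^i * real (Suc m choose Suc i))"
    by (subst sum.atMost_Suc_shift) (simp add: sum_negf)
  finally show ?thesis
    unfolding alt_binomial_sum_def by (simp add: lessThan_Suc_atMost mult.commute)
qed

lemma binomial_absorption_real:
  "real (m choose j) / (real j + 1) = real (Suc m choose Suc j) / (real m + 1)"
  using Suc_times_binomial [of j m] unfolding of_nat_eq_iff [where 'a = real, symmetric]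
  by (simp add: field_simps del: binomial_Suc_Suc)

lemma alt_binomial_sum_Suc_Suc:
  "alt_binomial_sum (Suc m) (Suc q) =
     alt_binomial_sum m (Suc q) + alt_binomial_sum (Suc m) q / (real m + 1)"
proof -
  have pascal: "alt_binomial_sum (Suc m) (Suc q) =
      (\<Sum>j<Suc m. real (m choose (j+1)) * (-1)^j / (real j + 1)^Suc q)
    + (\<Sum>j<Suc m. real (m choose j) * (-1)^j / (real j + 1)^Suc q)"
    unfolding alt_binomial_sum_def sum.distrib [symmetric]
    by (rule sum.cong) (auto simp: add_divide_distrib distrib_right)
  have absorb: "real (m choose j) * (-1)^j / (real j + 1)^Suc q =
      real (Suc m choose Suc j) * (-1)^j / (real j + 1)^q / (real m + 1)" for j
  proof -
    have "real (m choose j) * (-1)^j / (real j + 1)^Suc q =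
        real (m choose j) / (real j + 1) * ((-1)^j / (real j + 1)^q)"
      by simp
    then show ?thesis
      by (simp add: binomial_absorption_real del: binomial_Suc_Suc)
  qed
  have "(\<Sum>j<Suc m. real (m choose (j+1)) * (-1)^j / (real j + 1)^Suc q) =
      alt_binomial_sum m (Suc q)"
    by (simp add: alt_binomial_sum_def)
  moreover have "(\<Sum>j<Suc m. real (Suc m choose Suc j) * (-1)^j / (real j + 1)^q / (real m + 1)) =
      alt_binomial_sum (Suc m) q / (real m + 1)"
    unfolding alt_binomial_sum_def sum_divide_distrib by simp
  ultimately show ?thesis
    unfolding pascal absorb by simp
qed

lemma alt_binomial_sum_1_eq_gen_harm: "alt_binomial_sum m 1 = gen_harm 1 m"
proof (induction m)
  case 0
  show ?case by (simp add: alt_binomial_sum_def gen_harm_def)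
next
  case (Suc m)
  then show ?case
    using alt_binomial_sum_Suc_Suc [of m 0]
    by (simp add: alt_binomial_sum_Suc_0 gen_harm_def add.commute)
qed

lemma gen_harm_Suc: "gen_harm q (Suc m) = gen_harm q m + 1 / (real m + 1)^q"
  unfolding gen_harm_def by (simp add: add.commute)

lemma alt_binomial_sum_Suc_2:
  "alt_binomial_sum (Suc m) 2 = alt_binomial_sum m 2 + gen_harm 1 (Suc m) / (real m + 1)"
  using alt_binomial_sum_Suc_Suc [of m 1]
  by (simp only: alt_binomial_sum_1_eq_gen_harm Suc_1)

lemma gen_harm_2_eq:
  "gen_harm 2 (n+1) = alt_binomial_sum (n+1) 2
     - (\<Sum>k<n. 1 / (real k + 2) * gen_harm 1 (k+1))"
proof (induction n)
  case 0
  show ?case by (simp add: gen_harm_def alt_binomial_sum_def)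
next
  case (Suc n)
  have "alt_binomial_sum (n+2) 2 = alt_binomial_sum (n+1) 2
      + 1 / (real n + 2) * gen_harm 1 (n+1) + 1 / (real n + 2)^2"
    using alt_binomial_sum_Suc_2 [of "n+1"] gen_harm_Suc [of 1 "n+1"]
    by (simp add: add.commute add_divide_distrib power2_eq_square)
  then show ?case
    using Suc.IH gen_harm_Suc [of 2 "n+1"] by (simp add: add.commute)
qed

lemma gen_harm_3_eq:
  "gen_harm 3 (n+1) = alt_binomial_sum (n+1) 3
     - (\<Sum>j<n. 1 / (real j + 2)^2 * gen_harm 1 (j+1))
     - (\<Sum>j<n. 1 / (real j + 2) * alt_binomial_sum (j+1) 2)"
proof (induction n)
  case 0
  show ?case by (simp add: gen_harm_def alt_binomial_sum_def)
next
  case (Suc n)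
  have "alt_binomial_sum (n+2) 3 = alt_binomial_sum (n+1) 3
      + 1 / (real n + 2) * alt_binomial_sum (n+1) 2
      + 1 / (real n + 2)^2 * gen_harm 1 (n+1) + 1 / (real n + 2)^3"
    using alt_binomial_sum_Suc_Suc [of "n+1" 2] alt_binomial_sum_Suc_2 [of "n+1"]
      gen_harm_Suc [of 1 "n+1"]
    by (simp add: numeral_3_eq_3 add.commute add_divide_distrib power2_eq_square power3_eq_cube)
  then show ?case
    using Suc.IH gen_harm_Suc [of 3 "n+1"] by (simp add: add.commute)
qed

theorem proposition3:
  fixes n :: nat
  shows "(gen_harm 2 (n+1) =
           (\<Sum>j=0..n. real ((n+1) choose (j+1)) * (-1)^j / (real j + 1)^2)
         - (\<Sum>k<n. 1 / (real k + 2) * (\<Sum>j=0..k. real ((k+1) choose (j+1)) * (-1)^j / (real j + 1))))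
    \<and> (gen_harm 3 (n+1) =
           (\<Sum>j=0..n. real ((n+1) choose (j+1)) * (-1)^j / (real j + 1)^3)
         - (\<Sum>j<n. 1 / (real j + 2)^2 * (\<Sum>l=0..j. real ((j+1) choose (l+1)) * (-1)^l / (real l + 1)))
         - (\<Sum>j<n. 1 / (real j + 2) * (\<Sum>l=0..j. real ((j+1) choose (l+1)) * (-1)^l / (real l + 1)^2)))"
proof -
  have alt_binomial_sum_Suc: "alt_binomial_sum (k+1) q =
      (\<Sum>j=0..k. real ((k+1) choose (j+1)) * (-1)^j / (real j + 1)^q)" for k q
    unfolding alt_binomial_sum_def by (simp add: atLeast0AtMost lessThan_Suc_atMost)
  have gen_harm_1_Suc: "gen_harm 1 (k+1) =
      (\<Sum>j=0..k. real ((k+1) choose (j+1)) * (-1)^j / (real j + 1))" for k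
    using alt_binomial_sum_Suc [of k 1] unfolding alt_binomial_sum_1_eq_gen_harm power_one_right .
  show ?thesis
    using gen_harm_2_eq [of n] gen_harm_3_eq [of n]
    unfolding alt_binomial_sum_Suc gen_harm_1_Suc by (rule conjI)
qed

end
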